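(* Let $X$ be a subordinator with Lévy measure $\Pi$ satisfying $\int(e^{\lambda_0x}-1)\,\Pi(dx)<\infty$ for some $\lambda_0>0$. For $x>0$ let $L_x=\inf\{t:X(t)>x\}$ and $D_x=X(L_x)$ (and $D_0 = X(L_0)$ similarly). Then there exists a finite constant $C>0$ depending on $\Pi$ and $\lambda_0$ such that $$\mathbb{P}[D_x-x\ge y]\le Ce^{-\lambda_0 y}\quad\text{for all }x\ge0,\ y\ge0.$$
   Context: A subordinator is a right-continuous increasing process $(X(t),t\ge0)$ with $X(0)=0$, values in $[0,\infty)$, and independent homogeneous increments; it can be written $X(t)=dt+\sum_{s\le t}\Delta_s$ with drift $d\ge0$ and $(\Delta_s)$ a Poisson point process with intensity $\Pi$, the Lévy measure, a measure on $(0,\infty)$ with $\int(1\wedge x)\Pi(dx)<\infty$. *)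

theory Defs
  imports "HOL-Probability.Probability"
begin

definition subordinator :: "'a measure \<Rightarrow> (real \<Rightarrow> 'a \<Rightarrow> real) \<Rightarrow> bool" where
  "subordinator M X \<longleftrightarrow>
     prob_space M \<and>
     (\<forall>t\<ge>0. X t \<in> borel_measurable M) \<and>
     (\<forall>\<omega>\<in>space M. X 0 \<omega> = 0 \<and> mono_on {0..} (\<lambda>t. X t \<omega>) \<and>
        (\<forall>t\<ge>0. continuous (at_right t) (\<lambda>s. X s \<omega>))) \<and>
     (\<forall>(n::nat) (ts::nat \<Rightarrow> real). 0 \<le> ts 0 \<and> (\<forall>i<n. ts i \<le> ts (Suc i)) \<longrightarrow>
        prob_space.indep_vars M (\<lambda>_. borel) (\<lambda>i \<omega>. X (ts (Suc i)) \<omega> - X (ts i) \<omega>) {..<n}) \<and>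
     (\<forall>s\<ge>0. \<forall>t\<ge>0. distr M borel (\<lambda>\<omega>. X (s + t) \<omega> - X s \<omega>) = distr M borel (X t))"

definition subordinator_dl ::
  "'a measure \<Rightarrow> (real \<Rightarrow> 'a \<Rightarrow> real) \<Rightarrow> real \<Rightarrow> real measure \<Rightarrow> bool" where
  "subordinator_dl M X d Lev \<longleftrightarrow>
     subordinator M X \<and> 0 \<le> d \<and>
     sets Lev = sets borel \<and> emeasure Lev {..0} = 0 \<and>
     (\<integral>\<^sup>+ x. ennreal (min 1 x) \<partial>Lev) < \<infinity> \<and>
     (\<forall>t\<ge>0. \<forall>q\<ge>0.
        prob_space.expectation M (\<lambda>\<omega>. exp (- q * X t \<omega>))
          = exp (- t * (d * q + (\<integral>x. 1 - exp (- q * x) \<partial>Lev))))"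

text \<open>First passage time L_x = inf {t. X t > x} (only meaningful when the set is nonempty).\<close>
definition first_passage :: "(real \<Rightarrow> 'a \<Rightarrow> real) \<Rightarrow> real \<Rightarrow> 'a \<Rightarrow> real" where
  "first_passage X x \<omega> = Inf {t. 0 \<le> t \<and> x < X t \<omega>}"

definition overshoot_event ::
  "'a measure \<Rightarrow> (real \<Rightarrow> 'a \<Rightarrow> real) \<Rightarrow> real \<Rightarrow> real \<Rightarrow> 'a set" where
  "overshoot_event M X x y =
     {\<omega> \<in> space M. {t. 0 \<le> t \<and> x < X t \<omega>} \<noteq> {} \<and>
        y \<le> X (first_passage X x \<omega>) \<omega> - x}"

end

(*
  Cut time into a grid of mesh h.  If D_x - x >= y and the first passage across x
  happens in (kh, (k+1)h], where X(kh) lies in (x - n - 1, x - n], then the increment over that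
  interval is at least y + n.  Independence and stationarity of increments give

    P[D_x - x >= y] <= sum_n (sum_k P[X(kh) in (x - n - 1, x - n]]) * P[X(h) >= y + n].

  Decomposing at the first grid time at which X enters a window of length 1 bounds the inner sum
  by the expected number sum_j P[X(jh) <= 1] <= e / (1 - exp (-h Phi(1))) of grid times spent
  below level 1, where Phi is the Laplace exponent.  Markov's inequality with the exponential
  moment E exp(lambda0 X(h)) <= exp (h psi), psi = -Phi(-lambda0), gives
  P[X(h) >= a] <= (exp (h psi) - 1) / (1 - exp (-lambda0)) * exp (-lambda0 a) for a >= 1.
  For h = 1 / (psi + Phi(1) + 1) the product of the two h-dependent factors is at most
  2 e^2 psi / Phi(1), which is bounded in terms of Pi and lambda0 only, uniformly in the drift.

  The exponential moment itself comes from the Laplace transform by analytic continuation: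
  l |-> E exp((l - 1) X(t)) is a power series in l which agrees on (0, 1) with
  exp (-t Phi(1 - l)), and the latter is holomorphic on the disc of radius 1 + lambda0.
*)
theory Submission
  imports Defs "HOL-Complex_Analysis.Complex_Analysis"
begin

lemma power_div_fact_le_exp:
  fixes x :: real assumes "0 \<le> x" shows "x ^ n / fact n \<le> exp x"
proof -
  have "(\<Sum>i\<in>{n}. x ^ i / fact i) \<le> (\<Sum>i. x ^ i / fact i)"
    using assms summable_exp_generic[of x]
    by (intro sum_le_suminf) (auto simp: divide_inverse ac_simps)
  also have "\<dots> = exp x" by (simp add: exp_def divide_inverse ac_simps)
  finally show ?thesis by simp
qed

lemma exp_minus_one_le:
  fixes u :: real assumes "0 \<le> u" "u \<le> 1" shows "exp u - 1 \<le> exp 1 * u"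
proof -
  have "(1 - u) * exp u \<le> exp (- u) * exp u"
    using exp_ge_add_one_self[of "- u"] by (intro mult_right_mono) auto
  then have "exp u - 1 \<le> u * exp u" by (simp add: exp_minus algebra_simps)
  also have "\<dots> \<le> u * exp 1" using assms by (intro mult_left_mono) auto
  finally show ?thesis by (simp add: mult.commute)
qed

lemma half_le_one_minus_exp_neg:
  fixes v :: real assumes "0 \<le> v" "v \<le> 1" shows "v / 2 \<le> 1 - exp (- v)"
proof -
  have "exp (- v) \<le> 1 / (1 + v)"
    using exp_ge_add_one_self[of v] assms by (simp add: exp_minus field_simps)
  moreover have "v / 2 \<le> 1 - 1 / (1 + v)"
    using assms mult_left_mono[of v 1 v] by (simp add: field_simps)
  ultimately show ?thesis by linarith
qed

lemma exp_minus_one_times_div_le: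
  fixes u v :: real assumes u: "0 \<le> u" "u \<le> 1" and v: "0 < v" "v \<le> 1"
  shows "(exp u - 1) * (exp 1 / (1 - exp (- v))) \<le> 2 * exp 1 ^ 2 * (u / v)"
proof -
  have "exp 1 / (1 - exp (- v)) \<le> exp 1 / (v / 2)"
    using half_le_one_minus_exp_neg[of v] v by (intro divide_left_mono) auto
  then have "(exp u - 1) * (exp 1 / (1 - exp (- v))) \<le> (exp 1 * u) * (exp 1 / (v / 2))"
    using exp_minus_one_le[OF u] u v by (intro mult_mono) auto
  also have "\<dots> = 2 * exp 1 ^ 2 * (u / v)"
    using v by (simp add: power2_eq_square field_simps)
  finally show ?thesis .
qed

lemma suminf_ennreal_swap: "(\<Sum>k. \<Sum>n. f k n :: ennreal) = (\<Sum>n. \<Sum>k. f k n)"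
proof -
  have "(\<Sum>k. \<Sum>n. f k n) = (\<Sum>k. \<integral>\<^sup>+n. f k n \<partial>count_space UNIV)"
    by (simp add: nn_integral_count_space_nat)
  also have "\<dots> = (\<integral>\<^sup>+n. (\<Sum>k. f k n) \<partial>count_space UNIV)"
    by (rule nn_integral_suminf[symmetric]) simp
  also have "\<dots> = (\<Sum>n. \<Sum>k. f k n)"
    by (simp add: nn_integral_count_space_nat)
  finally show ?thesis .
qed

lemma suminf_ennreal_le_of_le_Cauchy_product:
  fixes a b p :: "nat \<Rightarrow> real"
  assumes a: "\<And>m. 0 \<le> a m" "summable a" "(\<Sum>m. a m) \<le> 1" and b: "\<And>j. 0 \<le> b j"
    and p: "\<And>k. p k \<le> (\<Sum>m\<le>k. a m * b (k - m))"
  shows "(\<Sum>k. ennreal (p k)) \<le> (\<Sum>j. ennreal (b j))"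
proof (cases "summable b")
  case False
  then have "(\<Sum>j. ennreal (b j)) = \<top>" using b summable_suminf_not_top by blast
  then show ?thesis by simp
next
  case True
  have "summable (\<lambda>m. norm (a m))" "summable (\<lambda>j. norm (b j))"
    using a b True by simp_all
  then have "(\<lambda>k. \<Sum>m\<le>k. a m * b (k - m)) sums ((\<Sum>m. a m) * (\<Sum>j. b j))"
    by (rule Cauchy_product_sums)
  then have Cauchy: "(\<Sum>k. ennreal (\<Sum>m\<le>k. a m * b (k - m))) = ennreal ((\<Sum>m. a m) * (\<Sum>j. b j))"
    using a b by (intro suminf_ennreal_eq sum_nonneg mult_nonneg_nonneg)
  have "(\<Sum>k. ennreal (p k)) \<le> (\<Sum>k. ennreal (\<Sum>m\<le>k. a m * b (k - m)))"
    using p by (intro suminf_le ennreal_leI summableI)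
  also have "\<dots> = ennreal ((\<Sum>m. a m) * (\<Sum>j. b j))"
    by (rule Cauchy)
  also have "\<dots> \<le> ennreal (\<Sum>j. b j)"
    using a b True by (intro ennreal_leI mult_left_le_one_le suminf_nonneg)
  also have "\<dots> = (\<Sum>j. ennreal (b j))"
    using True b by (simp add: suminf_ennreal2)
  finally show ?thesis .
qed

lemma sums_integral_of_nonneg:
  fixes f :: "nat \<Rightarrow> 'a \<Rightarrow> real"
  assumes int: "\<And>i. integrable M (f i)" and nonneg: "\<And>i. AE x in M. 0 \<le> f i x"
    and sums: "AE x in M. (\<lambda>i. f i x) sums F x" and int_F: "integrable M F"
  shows "(\<lambda>i. \<integral>x. f i x \<partial>M) sums (\<integral>x. F x \<partial>M)"
proof -
  have nonneg_all: "AE x in M. \<forall>i. 0 \<le> f i x" using nonneg by (simp add: AE_all_countable)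
  have F_nonneg: "AE x in M. 0 \<le> F x" using sums nonneg_all
    by eventually_elim (auto intro: sums_le[of "\<lambda>_. 0"])
  have integral_nonneg: "0 \<le> (\<integral>x. f i x \<partial>M)" for i using nonneg by (intro integral_nonneg_AE)
  have "ennreal (\<integral>x. F x \<partial>M) = (\<integral>\<^sup>+x. ennreal (F x) \<partial>M)"
    by (rule nn_integral_eq_integral[symmetric, OF int_F F_nonneg])
  also have "\<dots> = (\<integral>\<^sup>+x. (\<Sum>i. ennreal (f i x)) \<partial>M)"
    using sums nonneg_all by (intro nn_integral_cong_AE, eventually_elim) (rule suminf_ennreal_eq[symmetric], auto)
  also have "\<dots> = (\<Sum>i. \<integral>\<^sup>+x. ennreal (f i x) \<partial>M)"
    using int by (intro nn_integral_suminf) auto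
  also have "\<dots> = (\<Sum>i. ennreal (\<integral>x. f i x \<partial>M))"
    using int nonneg by (intro suminf_cong nn_integral_eq_integral) auto
  finally have "(\<lambda>i. ennreal (\<integral>x. f i x \<partial>M)) sums ennreal (\<integral>x. F x \<partial>M)"
    by (metis summableI summable_sums)
  then show ?thesis
    using integral_nonneg F_nonneg by (subst (asm) sums_ennreal) (auto intro: integral_nonneg_AE)
qed

section \<open>Moment generating functions by analytic continuation\<close>

lemma has_fps_expansion_of_sums_on_interval:
  fixes c :: "nat \<Rightarrow> complex" and f :: "complex \<Rightarrow> complex"
  assumes holo: "f holomorphic_on ball 0 1"
    and sums: "\<And>r. 0 < r \<Longrightarrow> r < 1 \<Longrightarrow> (\<lambda>n. c n * of_real r ^ n) sums f (of_real r)"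
  shows "f has_fps_expansion Abs_fps c"
proof -
  define H where "H = Abs_fps c"
  have radius: "1 \<le> fps_conv_radius H"
    unfolding fps_conv_radius_def
  proof (rule conv_radius_geI_ex')
    fix r :: real assume "0 < r" "ereal r < 1"
    then show "summable (\<lambda>n. fps_nth H n * of_real r ^ n)"
      using sums[of r] by (auto simp: H_def sums_iff)
  qed
  have "ball (0::complex) 1 \<subseteq> eball 0 (fps_conv_radius H)"
    using radius by (intro ball_eball_mono) (simp add: one_ereal_def)
  then have holo_diff: "(\<lambda>w. f w - eval_fps H w) holomorphic_on ball 0 1"
    using holo by (intro holomorphic_intros)
  have limpt: "of_real (1/2) islimpt (of_real ` {0<..<1} :: complex set)"
  proof (rule islimpt_isCont_image)
    show "(1/2::real) islimpt {0<..<1}"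
      using islimpt_greaterThanLessThan1[of "1/2" "1::real"] by (rule islimpt_subset) auto
    show "eventually (\<lambda>y. (of_real y :: complex) \<noteq> of_real (1/2)) (at (1/2))"
      unfolding of_real_eq_iff eventually_at_filter by simp
  qed (intro continuous_intros)
  have zero_on_interval: "f w - eval_fps H w = 0" if w: "w \<in> of_real ` {0<..<1}" for w
  proof -
    obtain r where r: "w = of_real r" "0 < r" "r < 1" using w by auto
    have "norm w < fps_conv_radius H"
      using r less_le_trans[OF _ radius, of "ereal r"] by simp
    then have "(\<lambda>n. c n * w ^ n) sums eval_fps H w"
      using sums_eval_fps[of w H] by (simp add: H_def)
    with sums[of r] r show ?thesis by (simp add: sums_unique2)
  qed
  have "f w - eval_fps H w = 0" if "w \<in> ball 0 1" for w
    by (rule analytic_continuation[OF holo_diff _ _ _ _ limpt zero_on_interval]) (use that in auto)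
  then show ?thesis
    unfolding has_fps_expansion_def H_def[symmetric]
    using less_le_trans[OF _ radius, of 0] eventually_nhds_in_open[of "ball 0 1" 0]
    by (auto elim!: eventually_mono)
qed

lemma sums_holomorphic_extension:
  fixes c :: "nat \<Rightarrow> complex" and f :: "complex \<Rightarrow> complex" and R :: real
  assumes holo: "f holomorphic_on ball 0 R" and R: "1 \<le> R"
    and sums: "\<And>r. 0 < r \<Longrightarrow> r < 1 \<Longrightarrow> (\<lambda>n. c n * of_real r ^ n) sums f (of_real r)"
    and z: "norm z < R"
  shows "(\<lambda>n. c n * z ^ n) sums f z"
proof -
  have "f has_fps_expansion Abs_fps c"
    using holomorphic_on_subset[OF holo subset_ball[OF R]] sums
    by (rule has_fps_expansion_of_sums_on_interval)
  then have "(\<lambda>n. fps_nth (Abs_fps c) n * z ^ n) sums f z"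
    using holo z by (intro has_fps_expansion_imp_sums_complex[where r = "ereal R"]) auto
  then show ?thesis by simp
qed

lemma nn_integral_exp_power_series:
  fixes Z :: "'a \<Rightarrow> real"
  assumes Z: "Z \<in> borel_measurable M" "\<And>\<omega>. \<omega> \<in> space M \<Longrightarrow> 0 \<le> Z \<omega>" and l: "0 \<le> l"
  shows "(\<integral>\<^sup>+\<omega>. ennreal (exp ((l - 1) * Z \<omega>)) \<partial>M)
       = (\<Sum>n. (\<integral>\<^sup>+\<omega>. ennreal (Z \<omega> ^ n * exp (- Z \<omega>) / fact n) \<partial>M) * ennreal (l ^ n))"
proof -
  note Z(1)[measurable]
  have pointwise: "ennreal (exp ((l - 1) * z))
      = (\<Sum>n. ennreal (z ^ n * exp (- z) / fact n) * ennreal (l ^ n))" if z: "0 \<le> z" for z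
  proof -
    have "(\<lambda>n. (l * z) ^ n / fact n * exp (- z)) sums (exp (l * z) * exp (- z))"
      using exp_converges[of "l * z"] by (intro sums_mult2) (simp add: divide_inverse ac_simps)
    then have "(\<lambda>n. z ^ n * exp (- z) / fact n * l ^ n) sums exp ((l - 1) * z)"
      by (simp add: power_mult_distrib exp_add[symmetric] algebra_simps)
    then have "(\<Sum>n. ennreal (z ^ n * exp (- z) / fact n * l ^ n)) = ennreal (exp ((l - 1) * z))"
      using z l by (intro suminf_ennreal_eq) auto
    then show ?thesis
      using z l by (simp add: ennreal_mult[symmetric])
  qed
  have "(\<integral>\<^sup>+\<omega>. ennreal (exp ((l - 1) * Z \<omega>)) \<partial>M)
      = (\<integral>\<^sup>+\<omega>. (\<Sum>n. ennreal (Z \<omega> ^ n * exp (- Z \<omega>) / fact n) * ennreal (l ^ n)) \<partial>M)"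
    using Z by (intro nn_integral_cong) (simp add: pointwise)
  also have "\<dots> = (\<Sum>n. \<integral>\<^sup>+\<omega>. ennreal (Z \<omega> ^ n * exp (- Z \<omega>) / fact n) * ennreal (l ^ n) \<partial>M)"
    by (intro nn_integral_suminf) measurable
  also have "\<dots> = (\<Sum>n. (\<integral>\<^sup>+\<omega>. ennreal (Z \<omega> ^ n * exp (- Z \<omega>) / fact n) \<partial>M) * ennreal (l ^ n))"
    using Z by (subst nn_integral_multc) auto
  finally show ?thesis .
qed

lemma (in prob_space) nn_integral_exp_power_series_expectation:
  fixes Z :: "'a \<Rightarrow> real"
  assumes Z: "Z \<in> borel_measurable M" "\<And>\<omega>. \<omega> \<in> space M \<Longrightarrow> 0 \<le> Z \<omega>" and l: "0 \<le> l"
  shows "(\<integral>\<^sup>+\<omega>. ennreal (exp ((l - 1) * Z \<omega>)) \<partial>M)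
       = (\<Sum>n. ennreal (expectation (\<lambda>\<omega>. Z \<omega> ^ n * exp (- Z \<omega>) / fact n) * l ^ n))"
proof -
  note Z(1)[measurable]
  have "integrable M (\<lambda>\<omega>. Z \<omega> ^ n * exp (- Z \<omega>) / fact n)" for n
    using Z(2) power_div_fact_le_exp[of "Z _" n]
    by (intro integrable_const_bound[where B = 1]) (auto simp: exp_minus field_simps)
  then have "(\<integral>\<^sup>+\<omega>. ennreal (Z \<omega> ^ n * exp (- Z \<omega>) / fact n) \<partial>M)
      = ennreal (expectation (\<lambda>\<omega>. Z \<omega> ^ n * exp (- Z \<omega>) / fact n))" for n
    using Z(2) by (intro nn_integral_eq_integral) auto
  moreover have "0 \<le> expectation (\<lambda>\<omega>. Z \<omega> ^ n * exp (- Z \<omega>) / fact n)" for n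
    using Z(2) by (intro integral_nonneg_AE) auto
  ultimately show ?thesis
    using nn_integral_exp_power_series[OF Z l] l by (simp add: ennreal_mult[symmetric])
qed

text \<open>As a function of \<open>l = s + 1\<close>, the moment generating function \<open>E exp (s Z)\<close> is a power
  series; if it agrees for \<open>0 < l < 1\<close> with a function holomorphic on the disc of radius \<open>R\<close>,
  the power series converges to that function on the whole disc.\<close>
lemma (in prob_space) nn_integral_exp_eq_holomorphic_extension:
  fixes Z :: "'a \<Rightarrow> real" and f :: "complex \<Rightarrow> complex" and g :: "real \<Rightarrow> real"
  assumes Z: "Z \<in> borel_measurable M" "\<And>\<omega>. \<omega> \<in> space M \<Longrightarrow> 0 \<le> Z \<omega>"
    and holo: "f holomorphic_on ball 0 R" and R: "1 \<le> R"
    and f_real: "\<And>l. 0 \<le> l \<Longrightarrow> l < R \<Longrightarrow> f (of_real l) = of_real (g l)"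
    and mgf: "\<And>l. 0 < l \<Longrightarrow> l < 1 \<Longrightarrow> expectation (\<lambda>\<omega>. exp ((l - 1) * Z \<omega>)) = g l"
    and l: "0 \<le> l" "l < R"
  shows "(\<integral>\<^sup>+\<omega>. ennreal (exp ((l - 1) * Z \<omega>)) \<partial>M) = ennreal (g l)"
proof -
  note Z(1)[measurable]
  define c where "c n = expectation (\<lambda>\<omega>. Z \<omega> ^ n * exp (- Z \<omega>) / fact n)" for n
  have c_nonneg: "0 \<le> c n" for n
    unfolding c_def using Z(2) by (intro integral_nonneg_AE) auto
  have complex_sums: "(\<lambda>n. of_real (c n) * of_real r ^ n) sums f (of_real r)"
    if r: "0 < r" "r < 1" for r
  proof -
    have "integrable M (\<lambda>\<omega>. exp ((r - 1) * Z \<omega>))"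
      using r Z(2) by (intro integrable_const_bound[where B = 1]) (auto simp: mult_nonpos_nonneg)
    then have "(\<lambda>n. ennreal (c n * r ^ n)) sums ennreal (g r)"
      using nn_integral_exp_power_series_expectation[OF Z, of r] r mgf[OF r]
      by (auto simp: c_def nn_integral_eq_integral intro!: summable_sums)
    moreover have "0 \<le> g r"
      unfolding mgf[OF r, symmetric] by (intro integral_nonneg_AE) auto
    ultimately have "(\<lambda>n. c n * r ^ n) sums g r"
      using r c_nonneg by (subst (asm) sums_ennreal) auto
    then have "(\<lambda>n. of_real (c n * r ^ n)) sums (of_real (g r) :: complex)"
      by (rule sums_of_real)
    then show ?thesis using f_real[of r] r R by simp
  qed
  have "(\<lambda>n. of_real (c n) * of_real l ^ n) sums f (of_real l)"
    by (rule sums_holomorphic_extension[OF holo R complex_sums]) (use l in auto)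
  then have "(\<lambda>n. Re (of_real (c n) * of_real l ^ n)) sums Re (f (of_real l))"
    by (rule sums_Re)
  then have "(\<lambda>n. c n * l ^ n) sums g l"
    using f_real[OF l] by (simp flip: of_real_power of_real_mult)
  then have "(\<Sum>n. ennreal (c n * l ^ n)) = ennreal (g l)"
    using c_nonneg l by (intro suminf_ennreal_eq) auto
  then show ?thesis
    using nn_integral_exp_power_series_expectation[OF Z l(1)] by (simp add: c_def)
qed

lemma nn_integral_exp_le_of_less:
  fixes Z :: "'a \<Rightarrow> real"
  assumes Z: "Z \<in> borel_measurable M" and a: "0 < a"
    and bound: "\<And>s. 0 \<le> s \<Longrightarrow> s < a \<Longrightarrow> (\<integral>\<^sup>+\<omega>. ennreal (exp (s * Z \<omega>)) \<partial>M) \<le> B"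
  shows "(\<integral>\<^sup>+\<omega>. ennreal (exp (a * Z \<omega>)) \<partial>M) \<le> B"
proof -
  define s where "s n = a - a / real (Suc n)" for n
  have s: "0 \<le> s n" "s n < a" for n
    using a by (auto simp: s_def field_simps)
  have "s \<longlonglongrightarrow> a - 0"
    unfolding s_def by (intro tendsto_intros LIMSEQ_Suc[OF lim_const_over_n])
  then have "(\<lambda>n. ennreal (exp (s n * Z \<omega>))) \<longlonglongrightarrow> ennreal (exp (a * Z \<omega>))" for \<omega>
    by (intro tendsto_ennrealI tendsto_intros) simp
  then have "liminf (\<lambda>n. ennreal (exp (s n * Z \<omega>))) = ennreal (exp (a * Z \<omega>))" for \<omega>
    by (rule lim_imp_Liminf[OF trivial_limit_sequentially])
  then have "(\<integral>\<^sup>+\<omega>. ennreal (exp (a * Z \<omega>)) \<partial>M)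
      = (\<integral>\<^sup>+\<omega>. liminf (\<lambda>n. ennreal (exp (s n * Z \<omega>))) \<partial>M)"
    by simp
  also have "\<dots> \<le> liminf (\<lambda>n. \<integral>\<^sup>+\<omega>. ennreal (exp (s n * Z \<omega>)) \<partial>M)"
    using Z by (intro nn_integral_liminf) measurable
  also have "\<dots> \<le> B"
    using bound s by (intro Liminf_le always_eventually) auto
  finally show ?thesis .
qed

section \<open>Levy measures with an exponential moment\<close>

locale exp_moment_levy_measure =
  fixes Lev :: "real measure" and lambda0 :: real
  assumes lambda0_pos: "0 < lambda0"
    and exp_moment_finite: "(\<integral>\<^sup>+x. ennreal (exp (lambda0 * x) - 1) \<partial>Lev) < \<infinity>"
    and sets_Lev: "sets Lev = sets borel"
    and Lev_nonpos: "emeasure Lev {..0} = 0"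
    and min_1_integral_finite: "(\<integral>\<^sup>+x. ennreal (min 1 x) \<partial>Lev) < \<infinity>"
begin

lemma borel_measurable_Lev: "f \<in> borel_measurable borel \<Longrightarrow> f \<in> borel_measurable Lev"
  by (subst measurable_cong_sets[OF sets_Lev refl])

lemma AE_Lev_pos: "AE x in Lev. 0 < x"
proof (rule AE_I')
  show "{..0} \<in> null_sets Lev" using Lev_nonpos sets_Lev by (simp add: null_sets_def)
qed auto

definition envelope :: "real \<Rightarrow> real" where "envelope x = exp (lambda0 * x) - exp (- x)"

lemma integrable_envelope: "integrable Lev envelope"
proof (rule integrableI_nonneg)
  show "envelope \<in> borel_measurable Lev" unfolding envelope_def by (intro borel_measurable_Lev) measurable
  show "AE x in Lev. 0 \<le> envelope x" using AE_Lev_pos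
  proof eventually_elim
    case (elim x)
    then have "exp (- x) \<le> 1" "1 \<le> exp (lambda0 * x)" using lambda0_pos by auto
    then show ?case unfolding envelope_def by linarith
  qed
  have "(\<integral>\<^sup>+x. ennreal (envelope x) \<partial>Lev) \<le>
      (\<integral>\<^sup>+x. ennreal (exp (lambda0 * x) - 1) + ennreal (min 1 x) \<partial>Lev)"
    using AE_Lev_pos
  proof (intro nn_integral_mono_AE, eventually_elim)
    case (elim x)
    have "1 - exp (- x) \<le> min 1 x" using exp_ge_add_one_self[of "-x"] by simp
    then have "envelope x \<le> (exp (lambda0 * x) - 1) + min 1 x" unfolding envelope_def by linarith
    moreover have "1 \<le> exp (lambda0 * x)" using lambda0_pos elim by simp
    ultimately show ?case using elim by (simp add: ennreal_plus[symmetric] ennreal_leI del: ennreal_plus)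
  qed
  also have "\<dots> = (\<integral>\<^sup>+x. ennreal (exp (lambda0 * x) - 1) \<partial>Lev) + (\<integral>\<^sup>+x. ennreal (min 1 x) \<partial>Lev)"
    by (intro nn_integral_add) (auto intro!: borel_measurable_Lev)
  also have "\<dots> < \<infinity>" using exp_moment_finite min_1_integral_finite by (simp add: ennreal_add_less_top)
  finally show "(\<integral>\<^sup>+x. ennreal (envelope x) \<partial>Lev) < \<infinity>" .
qed

lemma integrable_Lev_dominated:
  assumes "f \<in> borel_measurable borel" "\<And>x. 0 < x \<Longrightarrow> \<bar>f x\<bar> \<le> envelope x"
  shows "integrable Lev f"
proof (rule Bochner_Integration.integrable_bound[OF integrable_envelope])
  show "f \<in> borel_measurable Lev" using assms(1) by (rule borel_measurable_Lev)
  show "AE x in Lev. norm (f x) \<le> norm (envelope x)" using AE_Lev_pos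
    by eventually_elim (auto intro: order_trans[OF assms(2) abs_ge_self])
qed

lemma abs_one_minus_exp_le_envelope:
  assumes "0 < x" "-1 \<le> s" "s \<le> lambda0"
  shows "\<bar>1 - exp (s * x)\<bar> \<le> envelope x"
proof -
  have "exp (- x) \<le> exp (s * x)" "exp (s * x) \<le> exp (lambda0 * x)"
    using assms mult_right_mono[of "-1" s x] by (auto intro: mult_right_mono)
  moreover have "exp (- x) \<le> 1" "1 \<le> exp (lambda0 * x)" using assms lambda0_pos by auto
  ultimately show ?thesis unfolding envelope_def by linarith
qed

text \<open>The jump part of the Laplace exponent, with the sign of the argument flipped; the integral
  converges for \<open>-1 \<le> s \<le> lambda0\<close>.\<close>
definition jump_exponent :: "real \<Rightarrow> real" where
  "jump_exponent s = (\<integral>x. 1 - exp (s * x) \<partial>Lev)"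

definition laplace_exponent :: "real \<Rightarrow> real \<Rightarrow> real" where
  "laplace_exponent d q = d * q + jump_exponent (- q)"

lemma integrable_one_minus_exp:
  "-1 \<le> s \<Longrightarrow> s \<le> lambda0 \<Longrightarrow> integrable Lev (\<lambda>x. 1 - exp (s * x))"
  by (rule integrable_Lev_dominated) (auto intro!: abs_one_minus_exp_le_envelope)

lemma jump_exponent_0: "jump_exponent 0 = 0"
  unfolding jump_exponent_def by simp

lemma jump_exponent_antimono:
  assumes "0 \<le> s" "s \<le> lambda0" shows "jump_exponent lambda0 \<le> jump_exponent s"
  unfolding jump_exponent_def
proof (rule integral_mono_AE)
  show "integrable Lev (\<lambda>x. 1 - exp (lambda0 * x))" "integrable Lev (\<lambda>x. 1 - exp (s * x))"
    using assms by (auto intro!: integrable_one_minus_exp)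
  show "AE x in Lev. 1 - exp (lambda0 * x) \<le> 1 - exp (s * x)" using AE_Lev_pos
    by eventually_elim (use assms in \<open>simp add: mult_right_mono\<close>)
qed

lemma jump_exponent_neg_one_nonneg: "0 \<le> jump_exponent (- 1)"
  unfolding jump_exponent_def using AE_Lev_pos
  by (intro integral_nonneg_AE) (auto elim!: eventually_mono)

lemma jump_exponent_eq_0_if_neg_one_eq_0:
  assumes "jump_exponent (- 1) = 0" shows "jump_exponent s = 0"
proof -
  have "AE x in Lev. 1 - exp ((- 1) * x) = 0"
    using assms integrable_one_minus_exp[of "- 1"] AE_Lev_pos lambda0_pos unfolding jump_exponent_def
    by (subst integral_nonneg_eq_0_iff_AE[symmetric]) (auto elim!: eventually_mono)
  then have "AE x in Lev. 1 - exp (s * x) = 0" using AE_Lev_pos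
    by eventually_elim simp
  then show ?thesis unfolding jump_exponent_def by (simp add: integral_eq_zero_AE)
qed

definition exponent_ratio :: real where
  "exponent_ratio = max lambda0 (- jump_exponent lambda0 / jump_exponent (- 1))"

lemma laplace_exponent_1_nonneg: "0 \<le> d \<Longrightarrow> 0 \<le> laplace_exponent d 1"
  using jump_exponent_neg_one_nonneg by (simp add: laplace_exponent_def)

lemma neg_laplace_exponent_nonneg:
  assumes "0 \<le> d" shows "0 \<le> - laplace_exponent d (- lambda0)"
proof -
  have "0 \<le> d * lambda0" using assms lambda0_pos by simp
  then show ?thesis using lambda0_pos jump_exponent_antimono[of 0]
    by (simp add: laplace_exponent_def jump_exponent_0)
qed

lemma neg_laplace_exponent_le_ratio:
  assumes d: "0 \<le> d"
  shows "- laplace_exponent d (- lambda0) \<le> exponent_ratio * laplace_exponent d 1"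
proof -
  have "d * lambda0 \<le> exponent_ratio * d"
    using d unfolding exponent_ratio_def by (simp add: mult.commute mult_left_mono)
  moreover have "- jump_exponent lambda0 \<le> exponent_ratio * jump_exponent (- 1)"
  proof (cases "jump_exponent (- 1) = 0")
    case True
    then show ?thesis using jump_exponent_eq_0_if_neg_one_eq_0 by simp
  next
    case False
    then have pos: "0 < jump_exponent (- 1)" using jump_exponent_neg_one_nonneg by simp
    then have "- jump_exponent lambda0
        = (- jump_exponent lambda0 / jump_exponent (- 1)) * jump_exponent (- 1)"
      by simp
    also have "\<dots> \<le> exponent_ratio * jump_exponent (- 1)"
      unfolding exponent_ratio_def using pos by (intro mult_right_mono) auto
    finally show ?thesis .
  qed
  ultimately show ?thesis unfolding laplace_exponent_def by (simp add: algebra_simps)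
qed

definition overshoot_constant :: real where
  "overshoot_constant = max (exp lambda0) (2 * exp 1 ^ 2 * exponent_ratio / (1 - exp (- lambda0))\<^sup>2)"

lemma overshoot_constant_pos: "0 < overshoot_constant"
  unfolding overshoot_constant_def by (simp add: less_max_iff_disj)

text \<open>Dominated by the envelope, the series \<open>exp (l x) - 1 = \<Sum>n>0. (l x)\<^sup>n / n!\<close> can be
  integrated termwise against \<open>exp (- x) Lev(dx)\<close> up to \<open>l = 1 + lambda0\<close>.\<close>
lemma integral_exp_series_sums:
  assumes l: "0 \<le> l" "l \<le> 1 + lambda0"
  shows "(\<lambda>n. \<integral>x. (l * x) ^ Suc n / fact (Suc n) * exp (- x) \<partial>Lev)
    sums (jump_exponent (- 1) - jump_exponent (l - 1))"
proof -
  define f where "f n x = (l * x) ^ Suc n / fact (Suc n) * exp (- x)" for n x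
  define F where "F x = exp ((l - 1) * x) - exp (- x)" for x
  have f_sums: "(\<lambda>n. f n x) sums F x" for x
  proof -
    have "(\<lambda>n. (l * x) ^ Suc n / fact (Suc n)) sums (exp (l * x) - 1)"
      using exp_converges[of "l * x"] by (subst sums_Suc_iff) (simp add: divide_inverse ac_simps)
    then have "(\<lambda>n. (l * x) ^ Suc n / fact (Suc n) * exp (- x)) sums ((exp (l * x) - 1) * exp (- x))"
      by (rule sums_mult2)
    then show ?thesis
      unfolding f_def F_def by (simp add: left_diff_distrib exp_add[symmetric] algebra_simps)
  qed
  have f_nonneg: "0 \<le> f n x" if "0 < x" for n x using that l unfolding f_def by simp
  have f_le: "f n x \<le> F x" if "0 < x" for n x
    using sum_le_suminf[of "\<lambda>j. f j x" "{n}"] f_sums[of x] f_nonneg[OF that] by (simp add: sums_iff)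
  have F_le: "\<bar>F x\<bar> \<le> envelope x" if "0 < x" for x
    using that l mult_right_mono[of "l - 1" lambda0 x] mult_right_mono[of "-1" "l - 1" x]
    unfolding F_def envelope_def by simp
  have integrable_F: "integrable Lev F"
    using F_le unfolding F_def by (intro integrable_Lev_dominated) auto
  have integrable_f: "integrable Lev (f n)" for n
  proof (rule integrable_Lev_dominated)
    show "\<bar>f n x\<bar> \<le> envelope x" if "0 < x" for x
      using f_nonneg[OF that, of n] order_trans[OF f_le[OF that] order_trans[OF abs_ge_self F_le[OF that]]]
      by simp
  qed (unfold f_def, measurable)
  have "(\<lambda>n. \<integral>x. f n x \<partial>Lev) sums (\<integral>x. F x \<partial>Lev)"
    using AE_Lev_pos f_nonneg f_sums
    by (intro sums_integral_of_nonneg[OF integrable_f _ _ integrable_F]) (auto elim!: eventually_mono)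
  moreover have "(\<integral>x. F x \<partial>Lev) = (\<integral>x. (1 - exp ((- 1) * x)) - (1 - exp ((l - 1) * x)) \<partial>Lev)"
    unfolding F_def by simp
  moreover have "\<dots> = jump_exponent (- 1) - jump_exponent (l - 1)" unfolding jump_exponent_def
    using l lambda0_pos by (intro Bochner_Integration.integral_diff integrable_one_minus_exp) auto
  ultimately show ?thesis unfolding f_def by simp
qed

definition jump_exponent_coeff :: "nat \<Rightarrow> real" where
  "jump_exponent_coeff n =
     (if n = 0 then jump_exponent (- 1) else - (\<integral>x. x ^ n * exp (- x) \<partial>Lev) / fact n)"

lemma jump_exponent_sums:
  assumes l: "0 \<le> l" "l \<le> 1 + lambda0"
  shows "(\<lambda>n. jump_exponent_coeff n * l ^ n) sums jump_exponent (l - 1)"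
proof -
  have "(\<integral>x. (l * x) ^ Suc n / fact (Suc n) * exp (- x) \<partial>Lev)
      = - (jump_exponent_coeff (Suc n) * l ^ Suc n)" for n
  proof -
    have "(\<integral>x. (l * x) ^ Suc n / fact (Suc n) * exp (- x) \<partial>Lev)
        = (\<integral>x. (l ^ Suc n / fact (Suc n)) * (x ^ Suc n * exp (- x)) \<partial>Lev)"
      by (intro Bochner_Integration.integral_cong) (auto simp: power_mult_distrib)
    also have "\<dots> = (l ^ Suc n / fact (Suc n)) * (\<integral>x. x ^ Suc n * exp (- x) \<partial>Lev)"
      by (rule integral_mult_right_zero)
    finally show ?thesis unfolding jump_exponent_coeff_def by simp
  qed
  then have "(\<lambda>n. jump_exponent_coeff (Suc n) * l ^ Suc n)
      sums (jump_exponent (l - 1) - jump_exponent (- 1))"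
    using sums_minus[OF integral_exp_series_sums[OF l]] by simp
  then have "(\<lambda>n. jump_exponent_coeff n * l ^ n)
      sums (jump_exponent (l - 1) - jump_exponent (- 1) + jump_exponent_coeff 0 * l ^ 0)"
    by (subst sums_Suc_iff[symmetric]) simp
  then show ?thesis by (simp add: jump_exponent_coeff_def)
qed

definition jump_exponent_fps :: "complex fps" where
  "jump_exponent_fps = Abs_fps (\<lambda>n. of_real (jump_exponent_coeff n))"

lemma fps_conv_radius_jump_exponent: "ereal (1 + lambda0) \<le> fps_conv_radius jump_exponent_fps"
proof -
  have "summable (\<lambda>n. complex_of_real (jump_exponent_coeff n * (1 + lambda0) ^ n))"
    using jump_exponent_sums[of "1 + lambda0"] lambda0_pos
    by (simp only: summable_complex_of_real) (auto simp: sums_iff)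
  then have "norm (complex_of_real (1 + lambda0)) \<le> fps_conv_radius jump_exponent_fps"
    unfolding fps_conv_radius_def by (intro conv_radius_geI) (simp add: jump_exponent_fps_def)
  moreover have "norm (complex_of_real (1 + lambda0)) = 1 + lambda0"
    using lambda0_pos by (subst norm_of_real) simp
  ultimately show ?thesis by (simp only:)
qed

lemma eval_jump_exponent_fps:
  assumes "0 \<le> l" "l < 1 + lambda0"
  shows "eval_fps jump_exponent_fps (of_real l) = of_real (jump_exponent (l - 1))"
proof -
  have "norm (complex_of_real l) < fps_conv_radius jump_exponent_fps"
    using assms less_le_trans[OF _ fps_conv_radius_jump_exponent, of "ereal l"] by simp
  then have "(\<lambda>n. fps_nth jump_exponent_fps n * of_real l ^ n)
      sums eval_fps jump_exponent_fps (of_real l)"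
    by (rule sums_eval_fps)
  moreover have "(\<lambda>n. complex_of_real (jump_exponent_coeff n * l ^ n))
      sums complex_of_real (jump_exponent (l - 1))"
    using jump_exponent_sums[of l] assms by (intro sums_of_real) auto
  ultimately show ?thesis by (simp add: jump_exponent_fps_def sums_unique2)
qed

text \<open>By the Laplace transform identity, \<open>laplace_extension t d l = E exp ((l - 1) X t)\<close> for
  real \<open>l \<le> 1\<close>.\<close>
definition laplace_extension :: "real \<Rightarrow> real \<Rightarrow> complex \<Rightarrow> complex" where
  "laplace_extension t d w = exp (- of_real t * (of_real d * (1 - w) + eval_fps jump_exponent_fps w))"

lemma holomorphic_laplace_extension: "laplace_extension t d holomorphic_on ball 0 (1 + lambda0)"
proof -
  have "ball 0 (1 + lambda0) \<subseteq> eball 0 (fps_conv_radius jump_exponent_fps)"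
    using eball_mono[OF fps_conv_radius_jump_exponent] by simp
  then show ?thesis
    unfolding laplace_extension_def by (intro holomorphic_intros)
qed

lemma laplace_extension_of_real:
  assumes "0 \<le> l" "l < 1 + lambda0"
  shows "laplace_extension t d (of_real l) = of_real (exp (- t * laplace_exponent d (1 - l)))"
  using assms unfolding laplace_extension_def laplace_exponent_def
  by (simp add: eval_jump_exponent_fps exp_of_real[symmetric])

lemma nn_integral_exp_lambda0_le:
  fixes Z :: "'a \<Rightarrow> real"
  assumes M: "prob_space M"
    and Z: "Z \<in> borel_measurable M" "\<And>\<omega>. \<omega> \<in> space M \<Longrightarrow> 0 \<le> Z \<omega>"
    and t: "0 \<le> t" and d: "0 \<le> d"
    and laplace: "\<And>q. 0 \<le> q \<Longrightarrow>
      prob_space.expectation M (\<lambda>\<omega>. exp (- q * Z \<omega>)) = exp (- t * laplace_exponent d q)"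
  shows "(\<integral>\<^sup>+\<omega>. ennreal (exp (lambda0 * Z \<omega>)) \<partial>M)
    \<le> ennreal (exp (- t * laplace_exponent d (- lambda0)))"
proof -
  have mgf: "prob_space.expectation M (\<lambda>\<omega>. exp ((l - 1) * Z \<omega>))
      = exp (- t * laplace_exponent d (1 - l))" if "0 < l" "l < 1" for l
    using laplace[of "1 - l"] that by simp
  have "(\<integral>\<^sup>+\<omega>. ennreal (exp (s * Z \<omega>)) \<partial>M) \<le> ennreal (exp (- t * laplace_exponent d (- lambda0)))"
    if s: "0 \<le> s" "s < lambda0" for s
  proof -
    have "(\<integral>\<^sup>+\<omega>. ennreal (exp (s * Z \<omega>)) \<partial>M) = ennreal (exp (- t * laplace_exponent d (- s)))"
      using prob_space.nn_integral_exp_eq_holomorphic_extension[OF M Z holomorphic_laplace_extension _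
          laplace_extension_of_real mgf, of "1 + s"] s lambda0_pos
      by simp
    moreover have "laplace_exponent d (- lambda0) \<le> laplace_exponent d (- s)"
      using s d jump_exponent_antimono[of s] mult_left_mono[of s lambda0 d]
      unfolding laplace_exponent_def by simp
    ultimately show ?thesis
      using t by (simp add: ennreal_leI mult_left_mono)
  qed
  then show ?thesis
    by (rule nn_integral_exp_le_of_less[OF Z(1) lambda0_pos])
qed

end

locale exp_moment_subordinator = exp_moment_levy_measure Lev lambda0
  for Lev :: "real measure" and lambda0 :: real +
  fixes M :: "'a measure" and X :: "real \<Rightarrow> 'a \<Rightarrow> real" and d :: real
  assumes subordinator_dl: "subordinator_dl M X d Lev"
begin

lemma subordinator: "subordinator M X"
  using subordinator_dl unfolding subordinator_dl_def by blast

sublocale prob_space M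
  using subordinator unfolding subordinator_def by blast

lemma drift_nonneg: "0 \<le> d"
  using subordinator_dl unfolding subordinator_dl_def by blast

lemma borel_measurable_X[measurable]: "0 \<le> t \<Longrightarrow> X t \<in> borel_measurable M"
  using subordinator unfolding subordinator_def by blast

lemma X_0: "\<omega> \<in> space M \<Longrightarrow> X 0 \<omega> = 0"
  using subordinator unfolding subordinator_def by blast

lemma X_mono: "\<omega> \<in> space M \<Longrightarrow> 0 \<le> s \<Longrightarrow> s \<le> t \<Longrightarrow> X s \<omega> \<le> X t \<omega>"
  using subordinator unfolding subordinator_def mono_on_def by auto

lemma X_nonneg: "\<omega> \<in> space M \<Longrightarrow> 0 \<le> t \<Longrightarrow> 0 \<le> X t \<omega>"
  using X_mono[of \<omega> 0 t] X_0[of \<omega>] by simp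

lemma expectation_exp_neg_X:
  "0 \<le> t \<Longrightarrow> 0 \<le> q \<Longrightarrow> expectation (\<lambda>\<omega>. exp (- q * X t \<omega>)) = exp (- t * laplace_exponent d q)"
  using subordinator_dl unfolding subordinator_dl_def laplace_exponent_def jump_exponent_def by simp

abbreviation log_mgf :: real where "log_mgf \<equiv> - laplace_exponent d (- lambda0)"

lemma log_mgf_nonneg: "0 \<le> log_mgf"
  using neg_laplace_exponent_nonneg[OF drift_nonneg] .

lemma prob_X_ge_le:
  assumes t: "0 \<le> t" and a: "0 < a"
  shows "prob {\<omega> \<in> space M. a \<le> X t \<omega>} \<le> (exp (t * log_mgf) - 1) / (exp (lambda0 * a) - 1)"
proof -
  have mgf: "(\<integral>\<^sup>+\<omega>. ennreal (exp (lambda0 * X t \<omega>)) \<partial>M) \<le> ennreal (exp (t * log_mgf))"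
    using nn_integral_exp_lambda0_le[OF prob_space_axioms borel_measurable_X[OF t] X_nonneg[OF _ t] t
        drift_nonneg expectation_exp_neg_X[OF t]] by simp
  then have integrable: "integrable M (\<lambda>\<omega>. exp (lambda0 * X t \<omega>))"
    using t by (intro integrableI_nonneg) (auto simp: le_less_trans)
  have "expectation (\<lambda>\<omega>. exp (lambda0 * X t \<omega>)) \<le> exp (t * log_mgf)"
    using mgf integrable t by (simp add: nn_integral_eq_integral)
  moreover have "prob {\<omega> \<in> space M. a \<le> X t \<omega>} * (exp (lambda0 * a) - 1)
      \<le> expectation (\<lambda>\<omega>. exp (lambda0 * X t \<omega>)) - 1"
  proof -
    have "prob {\<omega> \<in> space M. a \<le> X t \<omega>} * (exp (lambda0 * a) - 1)
        = expectation (\<lambda>\<omega>. indicator {\<omega> \<in> space M. a \<le> X t \<omega>} \<omega> * (exp (lambda0 * a) - 1))"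
      using t by simp
    also have "\<dots> \<le> expectation (\<lambda>\<omega>. exp (lambda0 * X t \<omega>) - 1)"
    proof (rule integral_mono)
      show "integrable M (\<lambda>\<omega>. indicator {\<omega> \<in> space M. a \<le> X t \<omega>} \<omega> * (exp (lambda0 * a) - 1))"
        using t by (intro integrable_mult_left integrable_real_indicator) (auto simp: emeasure_eq_measure)
      show "integrable M (\<lambda>\<omega>. exp (lambda0 * X t \<omega>) - 1)" using integrable by auto
      show "indicator {\<omega> \<in> space M. a \<le> X t \<omega>} \<omega> * (exp (lambda0 * a) - 1) \<le> exp (lambda0 * X t \<omega>) - 1"
        if "\<omega> \<in> space M" for \<omega>
        using that lambda0_pos X_nonneg[OF that t] by (auto simp: indicator_def mult_left_mono)
    qed
    also have "\<dots> = expectation (\<lambda>\<omega>. exp (lambda0 * X t \<omega>)) - 1"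
      using integrable by (simp add: prob_space)
    finally show ?thesis .
  qed
  moreover have "0 < exp (lambda0 * a) - 1" using a lambda0_pos by simp
  ultimately show ?thesis by (simp add: pos_le_divide_eq)
qed

lemma prob_X_ge_le_exp:
  assumes h: "0 < h" and a: "1 \<le> a"
  shows "prob {\<omega> \<in> space M. a \<le> X h \<omega>}
    \<le> (exp (h * log_mgf) - 1) / (1 - exp (- lambda0)) * exp (- lambda0 * a)"
proof -
  have "exp (lambda0 * a) * exp (- lambda0) = exp (lambda0 * (a - 1))"
    by (simp add: exp_add[symmetric] algebra_simps)
  moreover have "1 \<le> exp (lambda0 * (a - 1))" using a lambda0_pos by simp
  ultimately have key: "exp (lambda0 * a) * (1 - exp (- lambda0)) \<le> exp (lambda0 * a) - 1"
    by (simp add: algebra_simps)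
  have pos: "0 < exp (lambda0 * a) * (1 - exp (- lambda0))" using lambda0_pos by simp
  have "prob {\<omega> \<in> space M. a \<le> X h \<omega>} \<le> (exp (h * log_mgf) - 1) / (exp (lambda0 * a) - 1)"
    using prob_X_ge_le[of h a] h a by simp
  also have "\<dots> \<le> (exp (h * log_mgf) - 1) / (exp (lambda0 * a) * (1 - exp (- lambda0)))"
  proof (rule divide_left_mono[OF key])
    show "0 \<le> exp (h * log_mgf) - 1" using log_mgf_nonneg h by (simp add: mult_nonneg_nonpos)
    show "0 < (exp (lambda0 * a) - 1) * (exp (lambda0 * a) * (1 - exp (- lambda0)))"
      using key pos lambda0_pos a by (intro mult_pos_pos) auto
  qed
  also have "\<dots> = (exp (h * log_mgf) - 1) / (1 - exp (- lambda0)) * exp (- lambda0 * a)"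
    by (simp add: exp_minus field_simps)
  finally show ?thesis .
qed

lemma prob_X_le_1:
  assumes t: "0 \<le> t"
  shows "prob {\<omega> \<in> space M. X t \<omega> \<le> 1} \<le> exp 1 * exp (- t * laplace_exponent d 1)"
proof -
  have "prob {\<omega> \<in> space M. X t \<omega> \<le> 1} = expectation (indicator {\<omega> \<in> space M. X t \<omega> \<le> 1})"
    using t by simp
  also have "\<dots> \<le> expectation (\<lambda>\<omega>. exp 1 * exp (- 1 * X t \<omega>))"
  proof (rule integral_mono)
    show "integrable M (indicator {\<omega> \<in> space M. X t \<omega> \<le> 1} :: 'a \<Rightarrow> real)"
      using t by (intro integrable_real_indicator) (auto simp: emeasure_eq_measure)
    show "integrable M (\<lambda>\<omega>. exp 1 * exp (- 1 * X t \<omega>))"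
      using t X_nonneg by (intro integrable_mult_right integrable_const_bound[where B = 1]) auto
    show "indicator {\<omega> \<in> space M. X t \<omega> \<le> 1} \<omega> \<le> exp 1 * exp (- 1 * X t \<omega>)" for \<omega>
      by (auto simp: indicator_def exp_add[symmetric])
  qed
  also have "\<dots> = exp 1 * exp (- t * laplace_exponent d 1)"
    using expectation_exp_neg_X[OF t, of 1] by simp
  finally show ?thesis .
qed

lemma suminf_prob_X_le_1:
  assumes h: "0 < h" and Phi: "0 < laplace_exponent d 1"
  shows "(\<Sum>j. ennreal (prob {\<omega> \<in> space M. X (real j * h) \<omega> \<le> 1}))
    \<le> ennreal (exp 1 / (1 - exp (- (h * laplace_exponent d 1))))"
proof -
  define q where "q = exp (- (h * laplace_exponent d 1))"
  have q: "0 \<le> q" "q < 1" unfolding q_def using h Phi by auto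
  have "prob {\<omega> \<in> space M. X (real j * h) \<omega> \<le> 1} \<le> exp 1 * q ^ j" for j
    using prob_X_le_1[of "real j * h"] h
    by (simp add: q_def exp_of_nat_mult[symmetric] algebra_simps)
  then have "(\<Sum>j. ennreal (prob {\<omega> \<in> space M. X (real j * h) \<omega> \<le> 1})) \<le> (\<Sum>j. ennreal (exp 1 * q ^ j))"
    by (intro suminf_le ennreal_leI summableI)
  also have "\<dots> = ennreal (exp 1 * (1 / (1 - q)))"
    using q by (intro suminf_ennreal_eq sums_mult geometric_sums) auto
  finally show ?thesis unfolding q_def by simp
qed

lemma prob_increment_eq:
  assumes "0 \<le> s" "0 \<le> t" "B \<in> sets borel"
  shows "prob {\<omega> \<in> space M. X (s + t) \<omega> - X s \<omega> \<in> B} = prob {\<omega> \<in> space M. X t \<omega> \<in> B}"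
proof -
  have "distr M borel (\<lambda>\<omega>. X (s + t) \<omega> - X s \<omega>) = distr M borel (X t)"
    using subordinator assms unfolding subordinator_def by blast
  then have "measure (distr M borel (\<lambda>\<omega>. X (s + t) \<omega> - X s \<omega>)) B = measure (distr M borel (X t)) B"
    by simp
  then show ?thesis
    using assms by (simp add: measure_distr vimage_def Int_def conj_commute)
qed

lemma prob_indep_increment:
  assumes abc: "0 \<le> a" "a \<le> b" "b \<le> c"
    and A: "A \<in> sets (borel :: (real \<times> real) measure)" and B: "B \<in> sets (borel :: real measure)"
  shows "prob {\<omega> \<in> space M. (X a \<omega>, X b \<omega>) \<in> A \<and> X c \<omega> - X b \<omega> \<in> B}
       = prob {\<omega> \<in> space M. (X a \<omega>, X b \<omega>) \<in> A} * prob {\<omega> \<in> space M. X c \<omega> - X b \<omega> \<in> B}"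
proof -
  define ts :: "nat \<Rightarrow> real"
    where "ts i = (if i = 0 then 0 else if i = 1 then a else if i = 2 then b else c)" for i
  define Y where "Y i \<omega> = X (ts (Suc i)) \<omega> - X (ts i) \<omega>" for i \<omega>
  have "0 \<le> ts 0 \<and> (\<forall>i<3. ts i \<le> ts (Suc i))"
    using abc unfolding ts_def by (auto simp: less_Suc_eq numeral_3_eq_3)
  then have "indep_vars (\<lambda>_. borel) Y {..<3}"
    using subordinator unfolding subordinator_def Y_def by blast
  then have "indep_var (PiM {0,1} (\<lambda>_. borel)) (\<lambda>\<omega>. restrict (\<lambda>i. Y i \<omega>) {0,1})
                       (PiM {2} (\<lambda>_. borel)) (\<lambda>\<omega>. restrict (\<lambda>i. Y i \<omega>) {2})"
    by (rule indep_var_restrict) auto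
  moreover have "(\<lambda>f. (f 0, f 0 + f 1))
      \<in> measurable (PiM {0::nat,1} (\<lambda>_. borel)) (borel :: (real \<times> real) measure)"
    unfolding borel_prod[symmetric] by measurable
  \<comment> \<open>\<open>indep_var\<close> needs both variables in one type, hence the dummy second component\<close>
  moreover have "(\<lambda>f. (f 2, 0::real)) \<in> measurable (PiM {2::nat} (\<lambda>_. borel)) (borel :: (real \<times> real) measure)"
    unfolding borel_prod[symmetric] by measurable
  ultimately have "indep_var borel ((\<lambda>f. (f 0, f 0 + f 1)) \<circ> (\<lambda>\<omega>. restrict (\<lambda>i. Y i \<omega>) {0,1}))
                        borel ((\<lambda>f. (f 2, 0::real)) \<circ> (\<lambda>\<omega>. restrict (\<lambda>i. Y i \<omega>) {2}))"
    by (rule indep_var_compose)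
  then have indep: "indep_var borel (\<lambda>\<omega>. (Y 0 \<omega>, Y 0 \<omega> + Y 1 \<omega>)) borel (\<lambda>\<omega>. (Y 2 \<omega>, 0::real))"
    by (simp add: comp_def)
  have Y: "Y 0 \<omega> = X a \<omega>" "Y (Suc 0) \<omega> = X b \<omega> - X a \<omega>" "Y 2 \<omega> = X c \<omega> - X b \<omega>"
    if "\<omega> \<in> space M" for \<omega>
    using that unfolding Y_def ts_def by (simp_all add: X_0 numeral_2_eq_2)
  have "B \<times> UNIV \<in> sets (borel :: (real \<times> real) measure)"
    using B unfolding borel_prod[symmetric] by simp
  from indep_varD[OF indep A this] show ?thesis
    by (simp add: vimage_def Int_def Y conj_commute cong: rev_conj_cong)
qed

end

section \<open>Renewal bound and the overshoot\<close>

lemma exists_grid_index: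
  fixes h L :: real assumes "0 < h" "0 < L"
  shows "\<exists>k::nat. real k * h < L \<and> L \<le> real (Suc k) * h"
proof
  define k where "k = nat (\<lceil>L / h\<rceil> - 1)"
  have "real k = real_of_int \<lceil>L / h\<rceil> - 1"
    unfolding k_def using assms by (subst of_nat_nat) auto
  then have "real k < L / h" "L / h \<le> real (Suc k)"
    by (linarith, simp add: ceiling_correct)
  then show "real k * h < L \<and> L \<le> real (Suc k) * h"
    using assms by (simp add: pos_less_divide_eq pos_divide_le_eq)
qed

context exp_moment_subordinator
begin

definition first_entrance :: "real \<Rightarrow> real \<Rightarrow> nat \<Rightarrow> 'a set" where
  "first_entrance h c m = {\<omega> \<in> space M. c - 1 < X (real m * h) \<omega> \<and>
     (m = 0 \<or> X (real (m - 1) * h) \<omega> \<le> c - 1)}"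

lemma borel_measurable_X_grid[measurable]: "0 \<le> h \<Longrightarrow> X (real k * h) \<in> borel_measurable M"
  by (rule borel_measurable_X) simp

lemma first_entrance_sets: "0 \<le> h \<Longrightarrow> first_entrance h c m \<in> sets M"
  unfolding first_entrance_def by measurable

lemma disjoint_family_first_entrance:
  assumes h: "0 \<le> h" shows "disjoint_family (first_entrance h c)"
proof -
  have "first_entrance h c m \<inter> first_entrance h c m' = {}" if "m < m'" for m m'
  proof -
    have "X (real m * h) \<omega> \<le> X (real (m' - 1) * h) \<omega>" if "\<omega> \<in> space M" for \<omega>
      using \<open>m < m'\<close> h that by (intro X_mono mult_right_mono) auto
    then show ?thesis using \<open>m < m'\<close> unfolding first_entrance_def by force
  qed
  then show ?thesis
    unfolding disjoint_family_on_def by (metis Int_commute linorder_neqE_nat)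
qed

lemma prob_first_entrance_increment:
  assumes h: "0 \<le> h"
  shows "prob (first_entrance h c m \<inter> {\<omega> \<in> space M. X (real (m + j) * h) \<omega> - X (real m * h) \<omega> \<le> 1})
    = prob (first_entrance h c m) * prob {\<omega> \<in> space M. X (real j * h) \<omega> \<le> 1}"
proof -
  define A where "A = {p :: real \<times> real. c - 1 < snd p \<and> (m = 0 \<or> fst p \<le> c - 1)}"
  have "{p \<in> space (borel \<Otimes>\<^sub>M borel). c - 1 < snd p \<and> (m = 0 \<or> fst p \<le> (c::real) - 1)}
      \<in> sets (borel \<Otimes>\<^sub>M borel)"
    by measurable
  then have A: "A \<in> sets borel"
    unfolding A_def borel_prod[symmetric] by (simp add: space_pair_measure)
  have times: "0 \<le> real (m - 1) * h" "real (m - 1) * h \<le> real m * h" "real m * h \<le> real (m + j) * h"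
    using h by (auto intro!: mult_right_mono)
  have "prob {\<omega> \<in> space M. X (real (m + j) * h) \<omega> - X (real m * h) \<omega> \<in> {..1}}
      = prob {\<omega> \<in> space M. X (real j * h) \<omega> \<in> {..1}}"
    using prob_increment_eq[of "real m * h" "real j * h" "{..1}"] h by (simp add: distrib_right)
  with prob_indep_increment[OF times A, of "{..1}"] show ?thesis
    unfolding first_entrance_def A_def by (simp add: Collect_conj_eq[symmetric] Int_def conj_ac)
qed

lemma window_subset_first_entrance:
  assumes h: "0 \<le> h"
  shows "{\<omega> \<in> space M. c - 1 < X (real k * h) \<omega> \<and> X (real k * h) \<omega> \<le> c}
    \<subseteq> (\<Union>m\<le>k. first_entrance h c m \<inter>
          {\<omega> \<in> space M. X (real (m + (k - m)) * h) \<omega> - X (real m * h) \<omega> \<le> 1})"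
proof
  fix \<omega> assume "\<omega> \<in> {\<omega> \<in> space M. c - 1 < X (real k * h) \<omega> \<and> X (real k * h) \<omega> \<le> c}"
  then have \<omega>: "\<omega> \<in> space M" "c - 1 < X (real k * h) \<omega>" "X (real k * h) \<omega> \<le> c" by auto
  define m where "m = (LEAST m. c - 1 < X (real m * h) \<omega>)"
  have m: "c - 1 < X (real m * h) \<omega>" "m \<le> k"
    unfolding m_def using \<omega>(2) by (auto intro: LeastI Least_le)
  have "m = 0 \<or> X (real (m - 1) * h) \<omega> \<le> c - 1"
    using not_less_Least[of "m - 1" "\<lambda>m. c - 1 < X (real m * h) \<omega>"] unfolding m_def[symmetric]
    by (cases m) auto
  then have "\<omega> \<in> first_entrance h c m" unfolding first_entrance_def using \<omega> m by auto
  moreover have "X (real k * h) \<omega> - X (real m * h) \<omega> \<le> 1" using \<omega> m by simp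
  ultimately show "\<omega> \<in> (\<Union>m\<le>k. first_entrance h c m \<inter>
      {\<omega> \<in> space M. X (real (m + (k - m)) * h) \<omega> - X (real m * h) \<omega> \<le> 1})"
    using m \<omega> by auto
qed

text \<open>Renewal argument: splitting at the first grid time \<open>m\<close> with \<open>X (m h) > c - 1\<close>, the walk
  can only stay in \<open>(c - 1, c]\<close> at time \<open>k\<close> if its increment over \<open>[m h, k h]\<close> is at most 1,
  and this increment is independent of the entrance and distributed as \<open>X ((k - m) h)\<close>.\<close>
lemma suminf_prob_window_le:
  assumes h: "0 \<le> h"
  shows "(\<Sum>k. ennreal (prob {\<omega> \<in> space M. c - 1 < X (real k * h) \<omega> \<and> X (real k * h) \<omega> \<le> c}))
    \<le> (\<Sum>j. ennreal (prob {\<omega> \<in> space M. X (real j * h) \<omega> \<le> 1}))"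
proof (rule suminf_ennreal_le_of_le_Cauchy_product)
  have "(\<lambda>m. prob (first_entrance h c m)) sums prob (\<Union>m. first_entrance h c m)"
    using h first_entrance_sets disjoint_family_first_entrance
    by (intro finite_measure_UNION) auto
  then show "summable (\<lambda>m. prob (first_entrance h c m))" "(\<Sum>m. prob (first_entrance h c m)) \<le> 1"
    by (auto simp: sums_iff)
  fix k
  have "prob {\<omega> \<in> space M. c - 1 < X (real k * h) \<omega> \<and> X (real k * h) \<omega> \<le> c}
      \<le> prob (\<Union>m\<le>k. first_entrance h c m \<inter>
          {\<omega> \<in> space M. X (real (m + (k - m)) * h) \<omega> - X (real m * h) \<omega> \<le> 1})"
    using h first_entrance_sets window_subset_first_entrance by (intro finite_measure_mono) auto
  also have "\<dots> \<le> (\<Sum>m\<le>k. prob (first_entrance h c m \<inter>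
          {\<omega> \<in> space M. X (real (m + (k - m)) * h) \<omega> - X (real m * h) \<omega> \<le> 1}))"
    using h first_entrance_sets by (intro finite_measure_subadditive_finite) auto
  finally show "prob {\<omega> \<in> space M. c - 1 < X (real k * h) \<omega> \<and> X (real k * h) \<omega> \<le> c}
      \<le> (\<Sum>m\<le>k. prob (first_entrance h c m) * prob {\<omega> \<in> space M. X (real (k - m) * h) \<omega> \<le> 1})"
    by (simp only: prob_first_entrance_increment[OF h])
qed auto

definition grid_event :: "real \<Rightarrow> real \<Rightarrow> real \<Rightarrow> nat \<Rightarrow> nat \<Rightarrow> 'a set" where
  "grid_event h x y k n = {\<omega> \<in> space M.
     x - real n - 1 < X (real k * h) \<omega> \<and> X (real k * h) \<omega> \<le> x - real n \<and>
     y + real n \<le> X (real (Suc k) * h) \<omega> - X (real k * h) \<omega>}"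

lemma grid_event_sets: "0 \<le> h \<Longrightarrow> grid_event h x y k n \<in> sets M"
  unfolding grid_event_def by measurable

text \<open>The first passage happens in some grid interval \<open>(k h, (k + 1) h]\<close>; \<open>n\<close> records how far
  below \<open>x\<close> the process still was at time \<open>k h\<close>, so the increment over the interval is at least
  \<open>y + n\<close>.\<close>
lemma overshoot_event_subset_grid:
  assumes h: "0 < h" and x: "0 \<le> x" and y: "0 < y"
  shows "overshoot_event M X x y \<subseteq> (\<Union>k. \<Union>n. grid_event h x y k n)"
proof
  fix \<omega> assume "\<omega> \<in> overshoot_event M X x y"
  then have \<omega>: "\<omega> \<in> space M" and ne: "{t. 0 \<le> t \<and> x < X t \<omega>} \<noteq> {}"
    and overshoot: "x + y \<le> X (first_passage X x \<omega>) \<omega>"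
    unfolding overshoot_event_def by auto
  define L where "L = first_passage X x \<omega>"
  have bdd: "bdd_below {t. 0 \<le> t \<and> x < X t \<omega>}" by (rule bdd_belowI[of _ 0]) auto
  have L0: "0 \<le> L" unfolding L_def first_passage_def using ne by (intro cInf_greatest) auto
  have "0 < L"
    using L0 overshoot x y X_0[OF \<omega>] unfolding L_def[symmetric] by (cases "L = 0") auto
  then obtain k where k: "real k * h < L" "L \<le> real (Suc k) * h"
    using exists_grid_index[OF h] by blast
  have below: "X (real k * h) \<omega> \<le> x"
  proof (rule ccontr)
    assume "\<not> X (real k * h) \<omega> \<le> x"
    then have "L \<le> real k * h"
      unfolding L_def first_passage_def using h by (intro cInf_lower[OF _ bdd]) auto
    then show False using k by simp
  qed
  define n where "n = nat \<lfloor>x - X (real k * h) \<omega>\<rfloor>"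
  have "real n \<le> x - X (real k * h) \<omega>" "x - X (real k * h) \<omega> < real n + 1"
    unfolding n_def using below by linarith+
  moreover have "X L \<omega> \<le> X (real (Suc k) * h) \<omega>" using X_mono[OF \<omega> L0 k(2)] .
  ultimately have "\<omega> \<in> grid_event h x y k n"
    unfolding grid_event_def using \<omega> overshoot unfolding L_def[symmetric] by auto
  then show "\<omega> \<in> (\<Union>k. \<Union>n. grid_event h x y k n)" by blast
qed

lemma prob_grid_event:
  assumes h: "0 \<le> h"
  shows "prob (grid_event h x y k n)
    = prob {\<omega> \<in> space M. x - real n - 1 < X (real k * h) \<omega> \<and> X (real k * h) \<omega> \<le> x - real n}
      * prob {\<omega> \<in> space M. y + real n \<le> X h \<omega>}"
proof -
  define A where "A = {p :: real \<times> real. x - real n - 1 < snd p \<and> snd p \<le> x - real n}"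
  have "{p \<in> space (borel \<Otimes>\<^sub>M borel). x - real n - 1 < snd p \<and> snd p \<le> x - real n}
      \<in> sets (borel \<Otimes>\<^sub>M borel)"
    by measurable
  then have A: "A \<in> sets borel"
    unfolding A_def borel_prod[symmetric] by (simp add: space_pair_measure)
  have times: "0 \<le> real k * h" "real k * h \<le> real k * h" "real k * h \<le> real (Suc k) * h"
    using h by (auto intro: mult_right_mono)
  have "real (Suc k) * h = real k * h + h" by (simp add: algebra_simps)
  then have "prob {\<omega> \<in> space M. X (real (Suc k) * h) \<omega> - X (real k * h) \<omega> \<in> {y + real n..}}
      = prob {\<omega> \<in> space M. X h \<omega> \<in> {y + real n..}}"
    using prob_increment_eq[of "real k * h" h "{y + real n..}"] h by simp
  moreover have "grid_event h x y k n = {\<omega> \<in> space M. (X (real k * h) \<omega>, X (real k * h) \<omega>) \<in> A \<and>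
      X (real (Suc k) * h) \<omega> - X (real k * h) \<omega> \<in> {y + real n..}}"
    unfolding grid_event_def A_def by auto
  ultimately show ?thesis
    using prob_indep_increment[OF times A, of "{y + real n..}"] unfolding A_def by simp
qed

lemma emeasure_overshoot_le_sum_grid:
  assumes h: "0 < h" and x: "0 \<le> x" and y: "0 < y"
  shows "emeasure M (overshoot_event M X x y)
    \<le> (\<Sum>n. (\<Sum>k. ennreal (prob {\<omega> \<in> space M.
          x - real n - 1 < X (real k * h) \<omega> \<and> X (real k * h) \<omega> \<le> x - real n}))
        * ennreal (prob {\<omega> \<in> space M. y + real n \<le> X h \<omega>}))"
proof -
  have "emeasure M (overshoot_event M X x y) \<le> emeasure M (\<Union>k. \<Union>n. grid_event h x y k n)"
    using overshoot_event_subset_grid[OF h x y] h grid_event_sets by (intro emeasure_mono) auto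
  also have "\<dots> \<le> (\<Sum>k. \<Sum>n. emeasure M (grid_event h x y k n))"
    using h grid_event_sets
    by (intro order_trans[OF emeasure_subadditive_countably] suminf_le emeasure_subadditive_countably
          summableI) auto
  also have "\<dots> = (\<Sum>n. \<Sum>k. ennreal (prob {\<omega> \<in> space M.
          x - real n - 1 < X (real k * h) \<omega> \<and> X (real k * h) \<omega> \<le> x - real n})
        * ennreal (prob {\<omega> \<in> space M. y + real n \<le> X h \<omega>}))"
    using h by (subst suminf_ennreal_swap) (simp add: emeasure_eq_measure prob_grid_event ennreal_mult)
  finally show ?thesis by (simp only: ennreal_suminf_multc)
qed

lemma emeasure_overshoot_le:
  assumes h: "0 < h" and x: "0 \<le> x" and y: "1 \<le> y"
  shows "emeasure M (overshoot_event M X x y)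
    \<le> ennreal (exp (- lambda0 * y) / (1 - exp (- lambda0))\<^sup>2) * ennreal (exp (h * log_mgf) - 1)
      * (\<Sum>j. ennreal (prob {\<omega> \<in> space M. X (real j * h) \<omega> \<le> 1}))"
proof -
  define q where "q = exp (- lambda0)"
  have q: "0 < q" "q < 1" unfolding q_def using lambda0_pos by auto
  define G where "G = (exp (h * log_mgf) - 1) / (1 - q) * exp (- lambda0 * y)"
  have G: "0 \<le> G" unfolding G_def using q h log_mgf_nonneg by (simp add: mult_nonneg_nonpos)
  define R where "R = (\<Sum>j. ennreal (prob {\<omega> \<in> space M. X (real j * h) \<omega> \<le> 1}))"
  have jump: "prob {\<omega> \<in> space M. y + real n \<le> X h \<omega>} \<le> G * q ^ n" for n
    using prob_X_ge_le_exp[OF h, of "y + real n"] y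
    by (simp add: G_def q_def exp_of_nat_mult[symmetric] exp_add[symmetric] algebra_simps)
  have "emeasure M (overshoot_event M X x y)
    \<le> (\<Sum>n. (\<Sum>k. ennreal (prob {\<omega> \<in> space M.
          x - real n - 1 < X (real k * h) \<omega> \<and> X (real k * h) \<omega> \<le> x - real n}))
        * ennreal (prob {\<omega> \<in> space M. y + real n \<le> X h \<omega>}))"
    using y by (intro emeasure_overshoot_le_sum_grid[OF h x]) simp
  also have "\<dots> \<le> (\<Sum>n. R * ennreal (G * q ^ n))"
    unfolding R_def using h jump
    by (intro suminf_le summableI mult_mono suminf_prob_window_le ennreal_leI) auto
  also have "\<dots> = R * ennreal (G / (1 - q))"
  proof -
    have "(\<lambda>n. G * q ^ n) sums (G * (1 / (1 - q)))"
      using q by (intro sums_mult geometric_sums) auto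
    then have "(\<Sum>n. ennreal (G * q ^ n)) = ennreal (G / (1 - q))"
      using G q by (subst suminf_ennreal_eq) auto
    then show ?thesis by (simp add: ennreal_suminf_cmult)
  qed
  also have "G / (1 - q) = exp (- lambda0 * y) / (1 - q)\<^sup>2 * (exp (h * log_mgf) - 1)"
    unfolding G_def by (simp add: power2_eq_square field_simps)
  also have "R * ennreal (exp (- lambda0 * y) / (1 - q)\<^sup>2 * (exp (h * log_mgf) - 1))
      = ennreal (exp (- lambda0 * y) / (1 - q)\<^sup>2) * ennreal (exp (h * log_mgf) - 1) * R"
  proof -
    have "0 \<le> exp (- lambda0 * y) / (1 - q)\<^sup>2" "0 \<le> exp (h * log_mgf) - 1"
      using h log_mgf_nonneg by (simp_all add: mult_nonneg_nonpos)
    then show ?thesis by (simp only: ennreal_mult mult_ac)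
  qed
  finally show ?thesis unfolding q_def R_def .
qed

text \<open>The mesh \<open>h\<close> balances the number of grid times spent below level 1, of order
  \<open>1 / (h laplace_exponent d 1)\<close>, against the factor \<open>exp (h log_mgf) - 1\<close> of the jump
  probability in one step.\<close>
lemma jump_factor_times_return_sum_le:
  defines "h \<equiv> 1 / (log_mgf + laplace_exponent d 1 + 1)"
  shows "ennreal (exp (h * log_mgf) - 1) * (\<Sum>j. ennreal (prob {\<omega> \<in> space M. X (real j * h) \<omega> \<le> 1}))
    \<le> ennreal (2 * exp 1 ^ 2 * exponent_ratio)"
proof (cases "laplace_exponent d 1 = 0")
  case True
  then have "log_mgf = 0"
    using neg_laplace_exponent_le_ratio[OF drift_nonneg] log_mgf_nonneg by simp
  then show ?thesis by simp
next
  case False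
  then have Phi: "0 < laplace_exponent d 1"
    using laplace_exponent_1_nonneg[OF drift_nonneg] by simp
  have h: "0 < h" unfolding h_def using log_mgf_nonneg Phi by simp
  define u where "u = h * log_mgf"
  define v where "v = h * laplace_exponent d 1"
  have "u + v + h = h * (log_mgf + laplace_exponent d 1 + 1)"
    unfolding u_def v_def by (simp add: algebra_simps)
  also have "\<dots> = 1" unfolding h_def using log_mgf_nonneg Phi by simp
  finally have "u + v + h = 1" .
  moreover have "0 \<le> u" "0 < v"
    unfolding u_def v_def using h Phi log_mgf_nonneg by (simp_all add: mult_nonneg_nonpos)
  ultimately have u: "0 \<le> u" "u \<le> 1" and v: "0 < v" "v \<le> 1" using h by linarith+
  have "u / v = log_mgf / laplace_exponent d 1" unfolding u_def v_def using h by simp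
  also have "\<dots> \<le> exponent_ratio"
    using neg_laplace_exponent_le_ratio[OF drift_nonneg] by (subst pos_divide_le_eq[OF Phi]) simp
  finally have ratio: "u / v \<le> exponent_ratio" .
  have "ennreal (exp u - 1) * (\<Sum>j. ennreal (prob {\<omega> \<in> space M. X (real j * h) \<omega> \<le> 1}))
      \<le> ennreal (exp u - 1) * ennreal (exp 1 / (1 - exp (- v)))"
    using suminf_prob_X_le_1[OF h Phi] unfolding v_def by (rule mult_left_mono) simp
  also have "\<dots> = ennreal ((exp u - 1) * (exp 1 / (1 - exp (- v))))"
    using u v by (intro ennreal_mult[symmetric]) auto
  also have "\<dots> \<le> ennreal (2 * exp 1 ^ 2 * (u / v))"
    using exp_minus_one_times_div_le[OF u v] by (rule ennreal_leI)
  also have "\<dots> \<le> ennreal (2 * exp 1 ^ 2 * exponent_ratio)"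
    using ratio by (intro ennreal_leI mult_left_mono) auto
  finally show ?thesis unfolding u_def .
qed

lemma prob_overshoot_le:
  assumes x: "0 \<le> x" and y: "0 \<le> y"
  shows "measure M (overshoot_event M X x y) \<le> overshoot_constant * exp (- lambda0 * y)"
proof (cases "y < 1")
  case True
  have "measure M (overshoot_event M X x y) \<le> 1" by (rule prob_le_1)
  also have "1 \<le> exp lambda0 * exp (- lambda0 * y)"
    using True lambda0_pos by (simp add: exp_add[symmetric] algebra_simps)
  also have "\<dots> \<le> overshoot_constant * exp (- lambda0 * y)"
    unfolding overshoot_constant_def by (intro mult_right_mono) auto
  finally show ?thesis .
next
  case False
  define h where "h = 1 / (log_mgf + laplace_exponent d 1 + 1)"
  have h: "0 < h" unfolding h_def
    using log_mgf_nonneg laplace_exponent_1_nonneg[OF drift_nonneg] by simp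
  define B where "B = 2 * exp 1 ^ 2 * exponent_ratio / (1 - exp (- lambda0))\<^sup>2"
  have ratio: "0 \<le> exponent_ratio" using lambda0_pos by (simp add: exponent_ratio_def le_max_iff_disj)
  have "emeasure M (overshoot_event M X x y)
      \<le> ennreal (exp (- lambda0 * y) / (1 - exp (- lambda0))\<^sup>2) * ennreal (exp (h * log_mgf) - 1)
        * (\<Sum>j. ennreal (prob {\<omega> \<in> space M. X (real j * h) \<omega> \<le> 1}))"
    using False by (intro emeasure_overshoot_le[OF h x]) simp
  also have "\<dots> \<le> ennreal (exp (- lambda0 * y) / (1 - exp (- lambda0))\<^sup>2)
        * ennreal (2 * exp 1 ^ 2 * exponent_ratio)"
    unfolding mult.assoc[of "ennreal _"]
    by (rule mult_left_mono[OF jump_factor_times_return_sum_le[folded h_def]]) simp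
  also have "\<dots> = ennreal (B * exp (- lambda0 * y))"
    using ratio by (subst ennreal_mult[symmetric]) (auto simp: B_def)
  finally have "measure M (overshoot_event M X x y) \<le> B * exp (- lambda0 * y)"
    using ratio by (simp add: emeasure_eq_measure B_def)
  also have "\<dots> \<le> overshoot_constant * exp (- lambda0 * y)"
    unfolding overshoot_constant_def B_def by (intro mult_right_mono) auto
  finally show ?thesis .
qed

end

theorem proposition2p2:
  fixes Lev :: "real measure" and lambda0 :: real
  assumes "0 < lambda0"
    and "(\<integral>\<^sup>+ x. ennreal (exp (lambda0 * x) - 1) \<partial>Lev) < \<infinity>"
  shows "\<exists>C::real. 0 < C \<and>
           (\<forall>(M::'a measure) X d. subordinator_dl M X d Lev \<longrightarrow>
              (\<forall>x\<ge>0. \<forall>y\<ge>0. measure M (overshoot_event M X x y) \<le> C * exp (- lambda0 * y)))"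
proof (cases "exp_moment_levy_measure Lev lambda0")
  case True
  then interpret exp_moment_levy_measure Lev lambda0 .
  show ?thesis
  proof (intro exI conjI allI impI)
    fix M :: "'a measure" and X d and x y :: real
    assume "subordinator_dl M X d Lev" "0 \<le> x" "0 \<le> y"
    then interpret exp_moment_subordinator Lev lambda0 M X d
      by unfold_locales
    show "measure M (overshoot_event M X x y) \<le> overshoot_constant * exp (- lambda0 * y)"
      using \<open>0 \<le> x\<close> \<open>0 \<le> y\<close> by (rule prob_overshoot_le)
  qed (rule overshoot_constant_pos)
next
  case False
  then have "\<not> subordinator_dl M X d Lev" for M :: "'a measure" and X d
    using assms unfolding exp_moment_levy_measure_def subordinator_dl_def by blast
  then show ?thesis by (intro exI[of _ 1]) simp
qed

end
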